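(* Let $a,b$ be integers with $-a+1\le b\le -2$ and let $(T_n)_{n\ge0}$ be defined by $T_0=1$, $T_1=a$, $T_2=a^2+b$, $T_{n+3}=aT_{n+2}+bT_{n+1}+T_n$. Then every nonnegative integer $n$ can be uniquely expressed as $n=\sum_{i=0}^N d_iT_i$, where: - $d_i\in\{0,\dots,a-1\}$; - for all $j\ge k\ge 0$, $d_jd_{j-1}\cdots d_{j-k}\le_{\mathrm{lex}}(a-1)(a+b-1)(a+b)\cdots(a+b)$. Here the right-hand word has length $k+1$: it consists of $a-1$, then $a+b-1$, followed by $k-1$ copies of $a+b$ (truncated appropriately when $k\le1$). The relation $\le_{\mathrm{lex}}$ is the lexicographic order on words of equal length. *)

theory Defs
  imports Main
begin

fun T :: "int \<Rightarrow> int \<Rightarrow> nat \<Rightarrow> int" where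
  "T a b 0 = 1"
| "T a b (Suc 0) = a"
| "T a b (Suc (Suc 0)) = a^2 + b"
| "T a b (Suc (Suc (Suc n))) =
     a * T a b (Suc (Suc n)) + b * T a b (Suc n) + T a b n"

definition lex_le :: "nat \<Rightarrow> (nat \<Rightarrow> int) \<Rightarrow> (nat \<Rightarrow> int) \<Rightarrow> bool" where
  "lex_le L w u \<longleftrightarrow>
     (\<forall>m<L. w m = u m) \<or> (\<exists>m<L. (\<forall>l<m. w l = u l) \<and> w m < u m)"

definition bound_word :: "int \<Rightarrow> int \<Rightarrow> nat \<Rightarrow> int" where
  "bound_word a b m = (if m = 0 then a - 1 else if m = 1 then a + b - 1 else a + b)"

definition admissible :: "int \<Rightarrow> int \<Rightarrow> (nat \<Rightarrow> int) \<Rightarrow> bool" where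
  "admissible a b d \<longleftrightarrow>
     (\<forall>i. 0 \<le> d i \<and> d i \<le> a - 1) \<and>
     (\<exists>N. \<forall>i>N. d i = 0) \<and>
     (\<forall>j k. k \<le> j \<longrightarrow> lex_le (Suc k) (\<lambda>m. d (j - m)) (bound_word a b))"

end

theory Submission
  imports Defs
begin

text \<open>The recurrence is built so that \<open>T\<^sub>K\<^sub>+\<^sub>2 - 1\<close> is exactly the value of the largest admissible
  word of length \<open>K + 2\<close>, namely \<open>(a-1)(a+b-1)(a+b)\<dots>(a+b)\<close>. By induction the lowest \<open>L\<close> digits
  of an admissible expansion are worth less than \<open>T\<^sub>L\<close>, so the order of admissible expansions is
  the lexicographic order of their digit words read from the top, which gives uniqueness.
  Existence is the greedy algorithm: the leading digit is \<open>n div T\<^sub>M\<close>, and when it equals \<open>a - 1\<close>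
  the remainder is too small for the next digits to exceed \<open>(a+b-1)(a+b)\<dots>(a+b)\<close>.\<close>

lemma lex_le_0 [simp]: "lex_le 0 u w"
  by (simp add: lex_le_def)

lemma lex_le_Suc:
  "lex_le (Suc k) u w \<longleftrightarrow>
     u 0 < w 0 \<or> (u 0 = w 0 \<and> lex_le k (\<lambda>m. u (Suc m)) (\<lambda>m. w (Suc m)))"
  by (auto simp: lex_le_def All_less_Suc2 Ex_less_Suc2)

lemma lex_le_cong: "(\<And>m. m < L \<Longrightarrow> w m = w' m) \<Longrightarrow> lex_le L u w \<longleftrightarrow> lex_le L u w'"
proof (induction L arbitrary: u w w')
  case (Suc L)
  from Suc.prems have "lex_le L (\<lambda>m. u (Suc m)) (\<lambda>m. w (Suc m)) \<longleftrightarrow>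
      lex_le L (\<lambda>m. u (Suc m)) (\<lambda>m. w' (Suc m))"
    by (intro Suc.IH) simp
  with Suc.prems[of 0] show ?case by (simp add: lex_le_Suc)
qed simp

lemma lex_le_prefix: "lex_le L u w \<Longrightarrow> K \<le> L \<Longrightarrow> lex_le K u w"
proof (induction K arbitrary: L u w)
  case (Suc K)
  then obtain L' where "L = Suc L'" by (cases L) auto
  with Suc show ?case by (auto simp: lex_le_Suc)
qed simp

lemma lex_le_antisym: "lex_le L u w \<Longrightarrow> lex_le L w u \<Longrightarrow> m < L \<Longrightarrow> u m = w m"
proof (induction L arbitrary: u w m)
  case (Suc L)
  then show ?case by (cases m) (auto simp: lex_le_Suc)
qed simp

text \<open>The word \<open>d\<^sub>L\<^sub>-\<^sub>1 \<dots> d\<^sub>0\<close>, most significant digit first; positions \<open>m \<ge> L\<close> carry junk.\<close>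
definition rev_word :: "(nat \<Rightarrow> int) \<Rightarrow> nat \<Rightarrow> nat \<Rightarrow> int" where
  "rev_word d L = (\<lambda>m. d (L - Suc m))"

lemma rev_word_Suc_0 [simp]: "rev_word d (Suc L) 0 = d L"
  by (simp add: rev_word_def)

lemma rev_word_Suc_tail [simp]: "(\<lambda>m. rev_word d (Suc L) (Suc m)) = rev_word d L"
  by (simp add: rev_word_def)

lemma rev_word_Suc: "rev_word d (Suc j) = (\<lambda>m. d (j - m))"
  by (simp add: rev_word_def)

definition expansion :: "int \<Rightarrow> int \<Rightarrow> nat \<Rightarrow> (nat \<Rightarrow> int) \<Rightarrow> int" where
  "expansion a b L d = (\<Sum>i<L. d i * T a b i)"

lemma expansion_0 [simp]: "expansion a b 0 d = 0"
  by (simp add: expansion_def)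

lemma expansion_Suc: "expansion a b (Suc L) d = expansion a b L d + d L * T a b L"
  by (simp add: expansion_def)

lemma expansion_cong: "(\<And>i. i < L \<Longrightarrow> d i = d' i) \<Longrightarrow> expansion a b L d = expansion a b L d'"
  by (simp add: expansion_def)

lemma expansion_eq_if_zero_from:
  "(\<And>i. K \<le> i \<Longrightarrow> d i = 0) \<Longrightarrow> K \<le> L \<Longrightarrow> expansion a b L d = expansion a b K d"
  by (induction L) (auto simp: expansion_Suc le_Suc_eq)

lemma expansion_eq_sum_atMost:
  assumes "\<forall>i>N. d i = 0" and "N < L"
  shows "(\<Sum>i\<le>N. d i * T a b i) = expansion a b L d"
proof -
  have "(\<Sum>i\<le>N. d i * T a b i) = expansion a b (Suc N) d"
    by (simp add: expansion_def lessThan_Suc_atMost)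
  also have "\<dots> = expansion a b L d"
    using assms by (intro expansion_eq_if_zero_from[symmetric]) auto
  finally show ?thesis .
qed

text \<open>Admissibility without finite support, and with only the windows reaching down to \<open>d\<^sub>0\<close>
  (the shorter ones are their prefixes).\<close>
definition lex_admissible :: "int \<Rightarrow> int \<Rightarrow> (nat \<Rightarrow> int) \<Rightarrow> bool" where
  "lex_admissible a b d \<longleftrightarrow> (\<forall>i. 0 \<le> d i \<and> d i \<le> a - 1) \<and>
     (\<forall>j. lex_le (Suc j) (rev_word d (Suc j)) (bound_word a b))"

lemma admissible_iff_lex_admissible:
  "admissible a b d \<longleftrightarrow> lex_admissible a b d \<and> (\<exists>N. \<forall>i>N. d i = 0)"
proof
  assume "lex_admissible a b d \<and> (\<exists>N. \<forall>i>N. d i = 0)"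
  moreover have "lex_le (Suc k) (\<lambda>m. d (j - m)) (bound_word a b)"
    if "lex_admissible a b d" "k \<le> j" for j k
    using that lex_le_prefix[of "Suc j" "\<lambda>m. d (j - m)" "bound_word a b" "Suc k"]
    by (auto simp: lex_admissible_def rev_word_Suc)
  ultimately show "admissible a b d"
    by (auto simp: admissible_def lex_admissible_def)
qed (auto simp: admissible_def lex_admissible_def rev_word_Suc)

lemma not_lex_le_rev_word:
  assumes "\<not> lex_le L (rev_word u L) (rev_word z L)"
  shows "\<exists>m<L. (\<forall>i. m < i \<and> i < L \<longrightarrow> z i = u i) \<and> z m < u m"
  using assms
proof (induction L)
  case (Suc L)
  show ?case
  proof (cases "u L = z L")
    case True
    with Suc.prems have "\<not> lex_le L (rev_word u L) (rev_word z L)"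
      by (simp add: lex_le_Suc)
    with True Suc.IH show ?thesis
      by (auto simp: less_Suc_eq)
  next
    case False
    with Suc.prems show ?thesis by (auto simp: lex_le_Suc)
  qed
qed simp

lemma T_Suc_Suc_eq_max_word:
  "T a b (Suc (Suc K)) =
     (a - 1) * T a b (Suc K) + (a + b - 1) * T a b K + (a + b) * (\<Sum>i<K. T a b i) + 1"
  by (induction K) (simp_all add: power2_eq_square algebra_simps)

context
  fixes a b :: int
  assumes b_lower: "-a + 1 \<le> b" and b_upper: "b \<le> -2"
begin

lemma T_pos: "T a b n \<ge> 1"
proof (induction n rule: less_induct)
  case (less n)
  consider "n = 0" | "n = 1" | K where "n = Suc (Suc K)"
    by (metis One_nat_def not0_implies_Suc)
  then show ?case
  proof cases
    case 3
    with less have "\<And>i. i \<le> Suc K \<Longrightarrow> T a b i \<ge> 1"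
      by auto
    then have "\<And>i. i \<le> Suc K \<Longrightarrow> T a b i \<ge> 0"
      by (meson order.trans zero_le_one)
    then have "(\<Sum>i<K. T a b i) \<ge> 0" "T a b K \<ge> 0" "T a b (Suc K) \<ge> 0"
      by (auto intro!: sum_nonneg)
    then have "0 \<le> (a - 1) * T a b (Suc K)" "0 \<le> (a + b - 1) * T a b K"
      "0 \<le> (a + b) * (\<Sum>i<K. T a b i)"
      using b_lower b_upper by simp_all
    then show ?thesis
      unfolding 3 T_Suc_Suc_eq_max_word by linarith
  qed (use b_lower b_upper in auto)
qed

lemma sum_T_nonneg: "(\<Sum>i<K. T a b i) \<ge> 0"
  using T_pos by (intro sum_nonneg) (meson order.trans zero_le_one)

lemma T_Suc_ge_mult: "(a - 1) * T a b n \<le> T a b (Suc n)"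
proof (cases n)
  case (Suc K)
  have "0 \<le> (a + b - 1) * T a b K" "0 \<le> (a + b) * (\<Sum>i<K. T a b i)"
    using T_pos[of K] sum_T_nonneg[of K] b_lower by auto
  then show ?thesis using Suc by (simp add: T_Suc_Suc_eq_max_word)
qed simp

lemma T_le_T_Suc: "T a b n \<le> T a b (Suc n)"
  using T_Suc_ge_mult[of n] mult_right_mono[of 1 "a - 1" "T a b n"] T_pos[of n] b_lower b_upper
  by linarith

lemma T_Suc_le_mult: "T a b (Suc n) \<le> a * T a b n"
proof -
  consider "n = 0" | "n = 1" | K where "n = Suc (Suc K)"
    by (metis One_nat_def not0_implies_Suc)
  then show ?thesis
  proof cases
    case 3
    have "b * T a b (Suc K) \<le> -2 * T a b (Suc K)"
      using b_upper T_pos[of "Suc K"] by (intro mult_right_mono) auto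
    with 3 T_le_T_Suc[of K] T_pos[of "Suc K"] show ?thesis by simp
  qed (use b_upper in \<open>simp_all add: power2_eq_square\<close>)
qed

lemma less_T: "int n < T a b n"
proof (induction n)
  case (Suc n)
  have "2 * T a b n \<le> (a - 1) * T a b n"
    using T_pos[of n] b_lower b_upper by (intro mult_right_mono) auto
  with Suc T_Suc_ge_mult[of n] T_pos[of n] show ?case by linarith
qed simp

subsection \<open>Size of admissible expansions\<close>

lemma expansion_nonneg: "(\<And>i. 0 \<le> d i) \<Longrightarrow> 0 \<le> expansion a b L d"
  unfolding expansion_def using T_pos
  by (intro sum_nonneg mult_nonneg_nonneg) (auto intro: order.trans[OF zero_le_one])

lemma expansion_Suc_le_sum:
  assumes lt: "expansion a b M d < T a b M"
    and IH: "lex_le M (rev_word d M) (\<lambda>_. a + b) \<Longrightarrow>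
      expansion a b M d \<le> (a + b) * (\<Sum>i<M. T a b i)"
    and lex: "lex_le (Suc M) (rev_word d (Suc M)) (\<lambda>_. a + b)"
  shows "expansion a b (Suc M) d \<le> (a + b) * (\<Sum>i<Suc M. T a b i)"
proof -
  from lex consider "d M < a + b" | "d M = a + b" "lex_le M (rev_word d M) (\<lambda>_. a + b)"
    by (auto simp: lex_le_Suc)
  then show ?thesis
  proof cases
    case 1
    then have "d M * T a b M \<le> (a + b - 1) * T a b M"
      using T_pos[of M] by (intro mult_right_mono) auto
    moreover have "0 \<le> (a + b) * (\<Sum>i<M. T a b i)"
      using sum_T_nonneg[of M] b_lower by auto
    ultimately show ?thesis
      using lt by (simp add: expansion_Suc distrib_left algebra_simps)
  next
    case 2
    with IH show ?thesis by (simp add: expansion_Suc distrib_left)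
  qed
qed

lemma expansion_Suc_lt_T:
  assumes adm: "lex_admissible a b d"
    and lt: "expansion a b M d < T a b M"
    and IH: "\<And>K. M = Suc K \<Longrightarrow> expansion a b K d < T a b K \<and>
      (lex_le K (rev_word d K) (\<lambda>_. a + b) \<longrightarrow> expansion a b K d \<le> (a + b) * (\<Sum>i<K. T a b i))"
  shows "expansion a b (Suc M) d < T a b (Suc M)"
proof (cases "d M < a - 1")
  case True
  then have "d M * T a b M \<le> (a - 2) * T a b M"
    using T_pos[of M] by (intro mult_right_mono) auto
  with lt T_Suc_ge_mult[of M] show ?thesis
    by (simp add: expansion_Suc algebra_simps)
next
  case False
  moreover have "d M \<le> a - 1"
    using adm unfolding lex_admissible_def by blast
  ultimately have top: "d M = a - 1" by simp
  show ?thesis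
  proof (cases M)
    case (Suc K)
    from adm have "lex_le (Suc (Suc K)) (rev_word d (Suc (Suc K))) (bound_word a b)"
      by (simp add: lex_admissible_def)
    with top Suc consider "d K < a + b - 1"
      | "d K = a + b - 1" "lex_le K (rev_word d K) (\<lambda>_. a + b)"
      by (auto simp: lex_le_Suc bound_word_def)
    moreover have split:
      "expansion a b (Suc M) d = expansion a b K d + d K * T a b K + (a - 1) * T a b M"
      using Suc top by (simp add: expansion_Suc)
    ultimately show ?thesis
    proof cases
      case 1
      then have "d K * T a b K \<le> (a + b - 2) * T a b K"
        using T_pos[of K] by (intro mult_right_mono) auto
      moreover have "0 \<le> (a + b) * (\<Sum>i<K. T a b i)"
        using sum_T_nonneg[of K] b_lower by auto
      ultimately show ?thesis
        using split IH[OF Suc] Suc by (simp add: T_Suc_Suc_eq_max_word algebra_simps)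
    next
      case 2
      then show ?thesis
        using split IH[OF Suc] Suc by (simp add: T_Suc_Suc_eq_max_word)
    qed
  qed (use top in \<open>auto simp: expansion_Suc\<close>)
qed

lemma expansion_bounds:
  assumes "lex_admissible a b d"
  shows "expansion a b L d < T a b L \<and>
    (lex_le L (rev_word d L) (\<lambda>_. a + b) \<longrightarrow> expansion a b L d \<le> (a + b) * (\<Sum>i<L. T a b i))"
proof (induction L rule: less_induct)
  case (less L)
  show ?case
  proof (cases L)
    case (Suc M)
    with less have "expansion a b M d < T a b M"
      "lex_le M (rev_word d M) (\<lambda>_. a + b) \<Longrightarrow> expansion a b M d \<le> (a + b) * (\<Sum>i<M. T a b i)"
      by auto
    with Suc less assms show ?thesis
      using expansion_Suc_lt_T expansion_Suc_le_sum by auto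
  qed simp
qed

lemma expansion_lt_T: "lex_admissible a b d \<Longrightarrow> expansion a b L d < T a b L"
  using expansion_bounds by blast

subsection \<open>Uniqueness\<close>

lemma expansion_less_if_top_digit_less:
  assumes adm: "lex_admissible a b u" and nonneg: "\<And>i. 0 \<le> w i"
    and "m < L" and agree: "\<forall>i. m < i \<and> i < L \<longrightarrow> u i = w i" and less: "u m < w m"
  shows "expansion a b L u < expansion a b L w"
  using \<open>m < L\<close> agree
proof (induction L)
  case (Suc M)
  show ?case
  proof (cases "M = m")
    case True
    have "(u m + 1) * T a b m \<le> w m * T a b m"
      using less T_pos[of m] by (intro mult_right_mono) auto
    with True expansion_lt_T[OF adm, of m] expansion_nonneg[of w, OF nonneg, of m]
    show ?thesis by (simp add: expansion_Suc algebra_simps)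
  next
    case False
    with Suc show ?thesis by (simp add: expansion_Suc)
  qed
qed simp

lemma lex_le_if_expansion_le:
  assumes adm: "lex_admissible a b z" and nonneg: "\<And>i. 0 \<le> w i"
    and le: "expansion a b L w \<le> expansion a b L z"
  shows "lex_le L (rev_word w L) (rev_word z L)"
proof (rule ccontr)
  assume "\<not> ?thesis"
  then obtain m where "m < L" "\<forall>i. m < i \<and> i < L \<longrightarrow> z i = w i" "z m < w m"
    using not_lex_le_rev_word by blast
  then have "expansion a b L z < expansion a b L w"
    by (intro expansion_less_if_top_digit_less[OF adm nonneg])
  with le show False by simp
qed

lemma lex_admissible_expansion_eq:
  assumes adm: "lex_admissible a b u" "lex_admissible a b w"
    and eq: "expansion a b L u = expansion a b L w" and "i < L"
  shows "u i = w i"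
proof -
  have "\<And>i. 0 \<le> u i" "\<And>i. 0 \<le> w i"
    using adm by (auto simp: lex_admissible_def)
  with adm eq have "lex_le L (rev_word u L) (rev_word w L)" "lex_le L (rev_word w L) (rev_word u L)"
    by (auto intro!: lex_le_if_expansion_le)
  from lex_le_antisym[OF this, of "L - Suc i"] \<open>i < L\<close> show ?thesis
    by (simp add: rev_word_def Suc_diff_Suc)
qed

subsection \<open>Existence\<close>

lemma lex_le_bound_tail_if_small:
  assumes adm: "lex_admissible a b w"
    and small: "expansion a b M w + (a - 1) * T a b M < T a b (Suc M)"
  shows "lex_le M (rev_word w M) (\<lambda>m. bound_word a b (Suc m))"
proof (cases M)
  case (Suc K)
  txt \<open>\<open>z\<close> spells the word \<open>(a+b-1)(a+b)\<dots>(a+b)\<close>, whose value plus \<open>(a-1) T\<^sub>M\<close> is \<open>T\<^sub>M\<^sub>+\<^sub>1 - 1\<close>.\<close>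
  define z where "z i = (if i < K then a + b else if i = K then a + b - 1 else 0)" for i
  have adm_z: "lex_admissible a b z"
    using b_lower b_upper by (auto simp: lex_admissible_def z_def lex_le_Suc bound_word_def)
  have "expansion a b K z = (a + b) * (\<Sum>i<K. T a b i)"
    unfolding expansion_def sum_distrib_left z_def by (intro sum.cong) auto
  then have "expansion a b M z = (a + b - 1) * T a b K + (a + b) * (\<Sum>i<K. T a b i)"
    using Suc by (simp add: expansion_Suc z_def)
  with small Suc have "expansion a b M w \<le> expansion a b M z"
    by (simp add: T_Suc_Suc_eq_max_word)
  with adm adm_z have "lex_le M (rev_word w M) (rev_word z M)"
    by (intro lex_le_if_expansion_le) (auto simp: lex_admissible_def)
  moreover have "rev_word z M m = bound_word a b (Suc m)" if "m < M" for m
    using that Suc by (auto simp: rev_word_def z_def bound_word_def)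
  ultimately show ?thesis
    using lex_le_cong[of M "rev_word z M" "\<lambda>m. bound_word a b (Suc m)" "rev_word w M"] by simp
qed simp

lemma lex_admissible_fun_upd:
  assumes adm: "lex_admissible a b w" and zero: "\<And>i. M \<le> i \<Longrightarrow> w i = 0"
    and q: "0 \<le> q" "q \<le> a - 1"
    and top: "q = a - 1 \<Longrightarrow> lex_le M (rev_word w M) (\<lambda>m. bound_word a b (Suc m))"
  shows "lex_admissible a b (w(M := q))"
proof -
  have "lex_le (Suc j) (rev_word (w(M := q)) (Suc j)) (bound_word a b)" for j
  proof -
    consider "j < M" | "j = M" | "M < j" by linarith
    then show ?thesis
    proof cases
      case 1
      then have "rev_word (w(M := q)) (Suc j) = rev_word w (Suc j)"
        by (auto simp: rev_word_Suc fun_eq_iff)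
      with adm show ?thesis by (simp add: lex_admissible_def)
    next
      case 2
      show ?thesis
      proof (cases "q = a - 1")
        case True
        have "lex_le M (rev_word (w(M := q)) M) (\<lambda>m. bound_word a b (Suc m))"
        proof (cases M)
          case (Suc K)
          then have "rev_word (w(M := q)) M = rev_word w M"
            by (auto simp: rev_word_Suc fun_eq_iff)
          with top True show ?thesis by simp
        qed simp
        with 2 True show ?thesis by (simp add: lex_le_Suc bound_word_def)
      next
        case False
        with 2 q show ?thesis by (simp add: lex_le_Suc bound_word_def)
      qed
    next
      case 3
      with zero b_lower b_upper show ?thesis
        by (simp add: lex_le_Suc bound_word_def)
    qed
  qed
  with adm q show ?thesis
    by (simp add: lex_admissible_def)
qed

lemma ex_lex_admissible_expansion:
  assumes "0 \<le> n" "n < T a b L"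
  shows "\<exists>d. lex_admissible a b d \<and> (\<forall>i\<ge>L. d i = 0) \<and> expansion a b L d = n"
  using assms
proof (induction L arbitrary: n)
  case 0
  then have "n = 0" by simp
  moreover have "lex_admissible a b (\<lambda>_. 0)"
    using b_lower b_upper by (auto simp: lex_admissible_def lex_le_Suc bound_word_def)
  ultimately show ?case by auto
next
  case (Suc M)
  define q where "q = n div T a b M"
  define r where "r = n mod T a b M"
  have n_eq: "n = q * T a b M + r"
    by (simp add: q_def r_def)
  have r: "0 \<le> r" "r < T a b M"
    using T_pos[of M] by (auto simp: r_def)
  have "0 \<le> q"
    using Suc.prems T_pos[of M] by (simp add: q_def pos_imp_zdiv_nonneg_iff)
  moreover have "q \<le> a - 1"
  proof -
    have "q * T a b M < a * T a b M"
      using n_eq r Suc.prems T_Suc_le_mult[of M] by linarith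
    then show ?thesis
      using T_pos[of M] by (simp add: mult_less_cancel_right)
  qed
  moreover obtain w where w: "lex_admissible a b w" "\<forall>i\<ge>M. w i = 0" "expansion a b M w = r"
    using Suc.IH r by blast
  moreover have "q = a - 1 \<Longrightarrow> lex_le M (rev_word w M) (\<lambda>m. bound_word a b (Suc m))"
    using w Suc.prems n_eq by (intro lex_le_bound_tail_if_small) (auto simp: algebra_simps)
  ultimately have "lex_admissible a b (w(M := q))"
    by (intro lex_admissible_fun_upd) auto
  moreover have "expansion a b (Suc M) (w(M := q)) = n"
    using w(3) n_eq expansion_cong[of M "w(M := q)" w]
    by (simp add: expansion_Suc algebra_simps)
  moreover have "\<forall>i\<ge>Suc M. (w(M := q)) i = 0"
    using w(2) by simp
  ultimately show ?case by blast
qed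

lemma ex_admissible_representation:
  "\<exists>d. admissible a b d \<and> (\<exists>N. (\<forall>i>N. d i = 0) \<and> int n = (\<Sum>i\<le>N. d i * T a b i))"
proof -
  obtain d where d: "lex_admissible a b d" "\<forall>i\<ge>n. d i = 0" "expansion a b n d = int n"
    using ex_lex_admissible_expansion[of "int n" n] less_T[of n] by auto
  have "(\<Sum>i\<le>n. d i * T a b i) = expansion a b (Suc n) d"
    using d(2) by (intro expansion_eq_sum_atMost) auto
  also have "\<dots> = int n"
    using d(2,3) expansion_eq_if_zero_from[of n d "Suc n"] by auto
  finally have "int n = (\<Sum>i\<le>n. d i * T a b i)" ..
  moreover have "\<forall>i>n. d i = 0"
    using d(2) by simp
  ultimately show ?thesis
    using d(1) unfolding admissible_iff_lex_admissible by metis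
qed

lemma admissible_representation_unique:
  assumes u: "admissible a b u" "\<forall>i>N. u i = 0"
    and w: "admissible a b w" "\<forall>i>N'. w i = 0"
    and eq: "(\<Sum>i\<le>N. u i * T a b i) = (\<Sum>i\<le>N'. w i * T a b i)"
  shows "u = w"
proof
  fix i
  define L where "L = Suc (N + N')"
  have "expansion a b L u = expansion a b L w"
    using eq u(2) w(2) expansion_eq_sum_atMost[of N u L] expansion_eq_sum_atMost[of N' w L]
    by (simp add: L_def)
  with u(1) w(1) have "i < L \<Longrightarrow> u i = w i"
    by (intro lex_admissible_expansion_eq) (auto simp: admissible_iff_lex_admissible)
  with u(2) w(2) show "u i = w i"
    by (cases "i < L") (auto simp: L_def)
qed

end

theorem proposition2p2:
  fixes a b :: int
  assumes "-a + 1 \<le> b" and "b \<le> -2"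
  shows "\<forall>n::nat. \<exists>!d. admissible a b d \<and>
           (\<exists>N. (\<forall>i>N. d i = 0) \<and> int n = (\<Sum>i\<le>N. d i * T a b i))"
proof (intro allI ex_ex1I)
  fix n :: nat
  show "\<exists>d. admissible a b d \<and> (\<exists>N. (\<forall>i>N. d i = 0) \<and> int n = (\<Sum>i\<le>N. d i * T a b i))"
    using ex_admissible_representation[OF assms] .
next
  fix n :: nat and u w
  assume "admissible a b u \<and> (\<exists>N. (\<forall>i>N. u i = 0) \<and> int n = (\<Sum>i\<le>N. u i * T a b i))"
    and "admissible a b w \<and> (\<exists>N. (\<forall>i>N. w i = 0) \<and> int n = (\<Sum>i\<le>N. w i * T a b i))"
  then show "u = w"
    using admissible_representation_unique[OF assms] by metis
qed

end
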